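(* Let $\mathcal C\subseteq(\mathbb C^2)^{\otimes n}$ be the codespace of a stabilizer code and let $\pi\in S_n$ be a qubit permutation with permutation operator $U_\pi$ such that $U_\pi\mathcal C=\mathcal C$, the restriction $U_\pi|_{\mathcal C}$ is not a scalar multiple of the identity, and $(U_\pi|_{\mathcal C})^2$ is a scalar multiple of the identity on $\mathcal C$. Then the order of $\pi$ in $S_n$ is even.
   Context: $U_\pi$ denotes the unitary on $(\mathbb C^2)^{\otimes n}$ that permutes tensor factors according to $\pi$; the order (period) of $\pi$ is the least $p\ge1$ with $\pi^p=\mathrm{id}$. *)

theory Defs
  imports Complex_Main "HOL-Combinatorics.Permutations"
begin

text \<open>n-qubit states: computational basis vectors are indexed by bit strings
  x in {0,1}^n, encoded as the subset of positions {..<n} where the bit is 1.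
  A state is a complex function on such subsets, vanishing elsewhere.\<close>

type_synonym state = "nat set \<Rightarrow> complex"

definition qstates :: "nat \<Rightarrow> state set" where
  "qstates n = {\<psi>. \<forall>x. \<not> x \<subseteq> {..<n} \<longrightarrow> \<psi> x = 0}"

definition symdiff :: "nat set \<Rightarrow> nat set \<Rightarrow> nat set" where
  "symdiff x y = (x - y) \<union> (y - x)"

text \<open>Pauli operator i^k X^a Z^b (a, b subsets of {..<n}):
  it maps the basis vector |x> to i^k (-1)^|b \<inter> x| |x xor a>.\<close>

definition pauli_op :: "nat \<Rightarrow> nat set \<Rightarrow> nat set \<Rightarrow> state \<Rightarrow> state" where
  "pauli_op k a b \<psi> = (\<lambda>y. \<i> ^ k * (-1) ^ card (b \<inter> symdiff y a) * \<psi> (symdiff y a))"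

definition pauli_group :: "nat \<Rightarrow> (state \<Rightarrow> state) set" where
  "pauli_group n = {pauli_op k a b | k a b. a \<subseteq> {..<n} \<and> b \<subseteq> {..<n}}"

definition stabilizer_group :: "nat \<Rightarrow> (state \<Rightarrow> state) set \<Rightarrow> bool" where
  "stabilizer_group n S \<longleftrightarrow>
     S \<subseteq> pauli_group n \<and> pauli_op 0 {} {} \<in> S \<and>
     (\<forall>P\<in>S. \<forall>Q\<in>S. P \<circ> Q \<in> S) \<and>
     (\<forall>P\<in>S. \<forall>Q\<in>S. P \<circ> Q = Q \<circ> P) \<and>
     pauli_op 2 {} {} \<notin> S"

definition codespace :: "nat \<Rightarrow> (state \<Rightarrow> state) set \<Rightarrow> state set" where
  "codespace n S = {\<psi> \<in> qstates n. \<forall>P\<in>S. P \<psi> = \<psi>}"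

text \<open>Qubit permutation operator U_pi: |x> \<mapsto> |pi ` x>, i.e. qubit i is moved to position pi i.\<close>

definition perm_op :: "(nat \<Rightarrow> nat) \<Rightarrow> state \<Rightarrow> state" where
  "perm_op \<pi> \<psi> = (\<lambda>y. \<psi> (\<pi> -` y))"

definition perm_order :: "(nat \<Rightarrow> nat) \<Rightarrow> nat" where
  "perm_order \<pi> = (LEAST p. p \<ge> 1 \<and> \<pi> ^^ p = id)"

definition scal :: "complex \<Rightarrow> state \<Rightarrow> state" where
  "scal c \<psi> = (\<lambda>y. c * \<psi> y)"

end

theory Submission
  imports Defs "HOL-Combinatorics.Cycles"
begin

text \<open>If \<open>\<pi>\<close> had odd order \<open>2m + 1\<close>, then on the codespace
  \<open>I = U\<^sub>\<pi>\<^bsup>2m+1\<^esup> = (U\<^sub>\<pi>\<^sup>2)\<^sup>m U\<^sub>\<pi> = c\<^sup>m U\<^sub>\<pi>\<close>, so \<open>U\<^sub>\<pi>\<close> would act there as the scalar \<open>c\<^sup>-\<^sup>m\<close>.\<close>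

lemma perm_op_funpow: "(perm_op \<pi> ^^ k) \<psi> = (\<lambda>y. \<psi> ((\<pi> ^^ k) -` y))"
  by (induction k) (simp_all add: perm_op_def vimage_comp comp_def)

lemma perm_op_funpow_id:
  assumes "\<pi> ^^ k = id"
  shows "(perm_op \<pi> ^^ k) \<psi> = \<psi>"
  by (simp add: perm_op_funpow assms)

lemma perm_op_scal: "perm_op \<pi> (scal a \<psi>) = scal a (perm_op \<pi> \<psi>)"
  by (simp add: perm_op_def scal_def)

lemma scal_inverse_cancel:
  assumes "a \<noteq> 0"
  shows "scal (inverse a) (scal a \<psi>) = \<psi>"
  by (simp add: scal_def mult.assoc[symmetric] assms)

lemma funpow_perm_order:
  assumes "permutation \<pi>"
  shows "\<pi> ^^ perm_order \<pi> = id"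
proof -
  obtain q where q: "\<pi> ^^ q = id" "q > 0"
    using permutation_is_nilpotent[OF assms] .
  show ?thesis
    unfolding perm_order_def by (rule LeastI2[of _ q]) (use q in auto)
qed

lemma funpow_even_eq_scal:
  assumes hom: "\<And>a \<phi>. U (scal a \<phi>) = scal a (U \<phi>)"
    and sq: "U (U \<psi>) = scal c \<psi>"
  shows "(U ^^ (2 * k)) \<psi> = scal (c ^ k) \<psi>"
proof (induction k)
  case 0
  then show ?case by (simp add: scal_def)
next
  case (Suc k)
  have "(U ^^ (2 * Suc k)) \<psi> = U (U ((U ^^ (2 * k)) \<psi>))"
    by (simp add: funpow_Suc_right)
  also have "\<dots> = scal (c ^ k) (U (U \<psi>))"
    by (simp add: Suc hom)
  also have "\<dots> = scal (c ^ Suc k) \<psi>"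
    by (simp add: sq scal_def mult_ac)
  finally show ?case .
qed

lemma scalar_if_odd_funpow_id:
  assumes hom: "\<And>a \<phi>. U (scal a \<phi>) = scal a (U \<phi>)"
    and sq: "\<forall>\<psi>\<in>V. U (U \<psi>) = scal c \<psi>"
    and odd_id: "\<forall>\<psi>\<in>V. (U ^^ Suc (2 * m)) \<psi> = \<psi>"
  shows "\<forall>\<psi>\<in>V. U \<psi> = scal (inverse (c ^ m)) \<psi>"
proof
  fix \<psi> assume "\<psi> \<in> V"
  have eq: "\<psi> = scal (c ^ m) (U \<psi>)"
  proof -
    have "\<psi> = U ((U ^^ (2 * m)) \<psi>)"
      using odd_id \<open>\<psi> \<in> V\<close> by simp
    also have "\<dots> = scal (c ^ m) (U \<psi>)"
      using funpow_even_eq_scal[OF hom] sq \<open>\<psi> \<in> V\<close> by (simp add: hom)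
    finally show ?thesis .
  qed
  show "U \<psi> = scal (inverse (c ^ m)) \<psi>"
  proof (cases "c ^ m = 0")
    case True
    \<comment> \<open>then \<open>\<psi> = 0\<close>, and homogeneity gives \<open>U 0 = 0\<close>\<close>
    have "U \<psi> = scal 0 (U (U \<psi>))"
      by (subst eq) (simp add: True hom)
    then show ?thesis
      unfolding True inverse_zero by (simp add: scal_def)
  next
    case False
    show ?thesis
      by (subst (2) eq) (rule scal_inverse_cancel[OF False, symmetric])
  qed
qed

theorem mainTheorem7:
  fixes n :: nat and S :: "(state \<Rightarrow> state) set" and \<pi> :: "nat \<Rightarrow> nat"
  assumes "stabilizer_group n S"
    and "\<pi> permutes {..<n}"
    and "perm_op \<pi> ` codespace n S = codespace n S"
    and "\<not> (\<exists>c. \<forall>\<psi>\<in>codespace n S. perm_op \<pi> \<psi> = scal c \<psi>)"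
    and "\<exists>c. \<forall>\<psi>\<in>codespace n S. perm_op \<pi> (perm_op \<pi> \<psi>) = scal c \<psi>"
  shows "even (perm_order \<pi>)"
proof (rule ccontr)
  assume "odd (perm_order \<pi>)"
  then obtain m where order: "perm_order \<pi> = Suc (2 * m)"
    by (elim oddE) simp
  have "permutation \<pi>"
    using assms(2) permutation_permutes by blast
  then have "\<pi> ^^ Suc (2 * m) = id"
    unfolding order[symmetric] by (rule funpow_perm_order)
  then have odd_id: "\<forall>\<psi>\<in>codespace n S. (perm_op \<pi> ^^ Suc (2 * m)) \<psi> = \<psi>"
    by (intro ballI perm_op_funpow_id)
  obtain c where sq: "\<forall>\<psi>\<in>codespace n S. perm_op \<pi> (perm_op \<pi> \<psi>) = scal c \<psi>"
    using assms(5) by blast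
  have "\<forall>\<psi>\<in>codespace n S. perm_op \<pi> \<psi> = scal (inverse (c ^ m)) \<psi>"
    using scalar_if_odd_funpow_id[OF perm_op_scal sq odd_id] .
  with assms(4) show False
    by blast
qed

end
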